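(* Let $\mathcal{A}$ be any simply closed set of Left dead-ends. Then $\mathcal{D}(\mathcal{A})\cap\mathcal{L}=\mathcal{A}$.
   Context: Games are finite partizan games. A universe is a set of games closed under options, disjunctive sums, conjugates, and forming $\{\mathscr{G}^L\mid\mathscr{G}^R\}$ from nonempty finite subsets of it; $\mathcal{D}(\mathcal{A})$ is the smallest universe containing $\mathcal{A}$. A set is simply closed if it is closed under taking options and under disjunctive sums. A Left dead-end is a game all of whose subpositions have no Left option; $\mathcal{L}$ is the set of Left dead-ends. *)

theory Defs
  imports Main "HOL-Library.FSet"
begin

text \<open>Finite partizan game forms: a game is given by its finite sets of Left
and Right options.  Games are identified as forms (literal equality).\<close>

datatype game = Game (leftOpts: "game fset") (rightOpts: "game fset")

definition isOption :: "game \<Rightarrow> game \<Rightarrow> bool" where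
  "isOption x g \<longleftrightarrow> x |\<in>| leftOpts g \<or> x |\<in>| rightOpts g"

lemma size_mem_le:
  "x \<in> fset L \<Longrightarrow> Suc (size x) \<le> (\<Sum>y\<in>fset L. Suc (size (y::game)))"
  by (rule member_le_sum[of x "fset L" "\<lambda>y. Suc (size y)"]) auto

lemma size_opt_less:
  "x |\<in>| L \<Longrightarrow> size x < size (Game L R)"
  "x |\<in>| R \<Longrightarrow> size x < size (Game L R)"
  using size_mem_le[of x L] size_mem_le[of x R] by auto

function conjugate :: "game \<Rightarrow> game" where
  "conjugate (Game L R) = Game (fimage conjugate R) (fimage conjugate L)"
  by pat_completeness auto
termination
  by (relation "measure size") (auto dest: size_opt_less)

function (sequential) gsum :: "game \<Rightarrow> game \<Rightarrow> game" where
  "gsum (Game L R) (Game L' R') =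
     Game ((\<lambda>x. gsum x (Game L' R')) |`| L |\<union>| (\<lambda>y. gsum (Game L R) y) |`| L')
          ((\<lambda>x. gsum x (Game L' R')) |`| R |\<union>| (\<lambda>y. gsum (Game L R) y) |`| R')"
  by pat_completeness auto
termination
  by (relation "measure (\<lambda>(g, h). size g + size h)") (auto dest: size_opt_less)

definition isSubposition :: "game \<Rightarrow> game \<Rightarrow> bool" where
  "isSubposition h g \<longleftrightarrow> isOption\<^sup>*\<^sup>* h g"

definition leftDeadEnd :: "game \<Rightarrow> bool" where
  "leftDeadEnd g \<longleftrightarrow> (\<forall>h. isSubposition h g \<longrightarrow> leftOpts h = {||})"

definition LeftDeadEnds :: "game set" where
  "LeftDeadEnds = {g. leftDeadEnd g}"

definition closedUnderOptions :: "game set \<Rightarrow> bool" where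
  "closedUnderOptions S \<longleftrightarrow> (\<forall>g\<in>S. \<forall>x. isOption x g \<longrightarrow> x \<in> S)"

definition closedUnderSums :: "game set \<Rightarrow> bool" where
  "closedUnderSums S \<longleftrightarrow> (\<forall>g\<in>S. \<forall>h\<in>S. gsum g h \<in> S)"

definition closedUnderConjugates :: "game set \<Rightarrow> bool" where
  "closedUnderConjugates S \<longleftrightarrow> (\<forall>g\<in>S. conjugate g \<in> S)"

definition simplyClosed :: "game set \<Rightarrow> bool" where
  "simplyClosed S \<longleftrightarrow> closedUnderOptions S \<and> closedUnderSums S"

definition universe :: "game set \<Rightarrow> bool" where
  "universe U \<longleftrightarrow> closedUnderOptions U \<and> closedUnderSums U \<and> closedUnderConjugates U \<and>
     (\<forall>L R. L \<noteq> {||} \<longrightarrow> R \<noteq> {||} \<longrightarrow> fset L \<subseteq> U \<longrightarrow> fset R \<subseteq> U \<longrightarrow> Game L R \<in> U)"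

definition universeClosure :: "game set \<Rightarrow> game set" where
  "universeClosure A = \<Inter>{U. universe U \<and> A \<subseteq> U}"

end

theory Submission
  imports Defs
begin

text \<open>Let \<open>U\<close> be the set of games each of whose Left dead-end subpositions lies in \<open>A\<close> and
each of whose Right dead-end subpositions is the conjugate of a member of \<open>A\<close>.  Then \<open>U\<close> is a
universe: it is clearly closed under options and conjugates; a dead-end subposition of \<open>g + h\<close>
is a sum of dead-end subpositions of \<open>g\<close> and \<open>h\<close>, so closure under sums is inherited from \<open>A\<close>;
and a game \<open>{G\<^sup>L | G\<^sup>R}\<close> with both sides nonempty is no dead end.  It contains \<open>A\<close>, because
a Left dead-end that is also a Right dead-end is \<open>0\<close>, which is its own conjugate.  Hence
\<open>D(A) \<subseteq> U\<close>, and by construction \<open>U \<inter> \<L> \<subseteq> A\<close>.\<close>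

definition rightDeadEnd :: "game \<Rightarrow> bool" where
  "rightDeadEnd g \<longleftrightarrow> (\<forall>h. isSubposition h g \<longrightarrow> rightOpts h = {||})"

lemma rtranclp_map:
  assumes "r\<^sup>*\<^sup>* x y" and "\<And>x y. r x y \<Longrightarrow> s (f x) (f y)"
  shows "s\<^sup>*\<^sup>* (f x) (f y)"
  using assms(1) by induction (auto intro: rtranclp.rtrancl_into_rtrancl assms(2))

lemma isSubposition_refl [simp]: "isSubposition g g"
  unfolding isSubposition_def by simp

lemma isSubposition_option_trans:
  "isSubposition x y \<Longrightarrow> isOption y g \<Longrightarrow> isSubposition x g"
  unfolding isSubposition_def by (rule rtranclp.rtrancl_into_rtrancl)

lemma isSubpositionE:
  assumes "isSubposition x g"
  obtains "x = g" | y where "isOption y g" "isSubposition x y"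
  using assms unfolding isSubposition_def by (cases rule: rtranclp.cases) auto

lemma isSubposition_closedUnderOptions:
  assumes "closedUnderOptions S" "g \<in> S" "isSubposition x g"
  shows "x \<in> S"
  using assms(3,2) unfolding isSubposition_def
  by (induction rule: converse_rtranclp_induct)
    (use assms(1) in \<open>auto simp: closedUnderOptions_def\<close>)

lemma leftDeadEnd_rightDeadEnd_zero:
  assumes "leftDeadEnd g" "rightDeadEnd g"
  shows "g = Game {||} {||}"
proof -
  have "leftOpts g = {||}" "rightOpts g = {||}"
    using assms isSubposition_refl unfolding leftDeadEnd_def rightDeadEnd_def by blast+
  then show ?thesis by (cases g) simp
qed

lemma not_leftDeadEnd_Game: "L \<noteq> {||} \<Longrightarrow> \<not> leftDeadEnd (Game L R)"
  unfolding leftDeadEnd_def by (metis game.sel(1) isSubposition_refl)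

lemma not_rightDeadEnd_Game: "R \<noteq> {||} \<Longrightarrow> \<not> rightDeadEnd (Game L R)"
  unfolding rightDeadEnd_def by (metis game.sel(2) isSubposition_refl)

lemma conjugate_conjugate [simp]: "conjugate (conjugate g) = g"
  by (induction g) (simp add: fset.map_comp fset.map_ident_strong)

lemma conjugate_opts:
  "leftOpts (conjugate g) = conjugate |`| rightOpts g"
  "rightOpts (conjugate g) = conjugate |`| leftOpts g"
  by (cases g; simp)+

lemma isOption_conjugate: "isOption x g \<Longrightarrow> isOption (conjugate x) (conjugate g)"
  unfolding isOption_def conjugate_opts by auto

lemma isSubposition_conjugate:
  "isSubposition x g \<Longrightarrow> isSubposition (conjugate x) (conjugate g)"
  unfolding isSubposition_def by (erule rtranclp_map) (rule isOption_conjugate)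

lemma isSubposition_conjugate_iff:
  "isSubposition x (conjugate g) \<longleftrightarrow> isSubposition (conjugate x) g"
  by (metis conjugate_conjugate isSubposition_conjugate)

lemma leftDeadEnd_conjugate_iff: "leftDeadEnd (conjugate g) \<longleftrightarrow> rightDeadEnd g"
  unfolding leftDeadEnd_def rightDeadEnd_def isSubposition_conjugate_iff
  by (metis conjugate_conjugate conjugate_opts(1) fimage_is_fempty)

lemma rightDeadEnd_conjugate_iff: "rightDeadEnd (conjugate g) \<longleftrightarrow> leftDeadEnd g"
  using leftDeadEnd_conjugate_iff[of "conjugate g"] by simp

lemma gsum_opts:
  "leftOpts (gsum g h) = (\<lambda>x. gsum x h) |`| leftOpts g |\<union>| gsum g |`| leftOpts h"
  "rightOpts (gsum g h) = (\<lambda>x. gsum x h) |`| rightOpts g |\<union>| gsum g |`| rightOpts h"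
  by (cases g; cases h; simp)+

lemma isOption_gsum_iff: "isOption x (gsum g h) \<longleftrightarrow>
   (\<exists>g'. isOption g' g \<and> x = gsum g' h) \<or> (\<exists>h'. isOption h' h \<and> x = gsum g h')"
  unfolding isOption_def gsum_opts by auto

lemma isSubposition_gsum:
  assumes "isSubposition g' g" "isSubposition h' h"
  shows "isSubposition (gsum g' h') (gsum g h)"
proof -
  have "isOption\<^sup>*\<^sup>* (gsum g' h') (gsum g h')"
    using assms(1) unfolding isSubposition_def
    by (rule rtranclp_map[where f = "\<lambda>x. gsum x h'"]) (unfold isOption_gsum_iff, blast)
  moreover have "isOption\<^sup>*\<^sup>* (gsum g h') (gsum g h)"
    using assms(2) unfolding isSubposition_def
    by (rule rtranclp_map[where f = "gsum g"]) (unfold isOption_gsum_iff, blast)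
  ultimately show ?thesis unfolding isSubposition_def by (rule rtranclp_trans)
qed

lemma isSubposition_gsumE:
  assumes "isSubposition x (gsum g h)"
  obtains g' h' where "isSubposition g' g" "isSubposition h' h" "x = gsum g' h'"
proof -
  have "\<exists>g' h'. isOption\<^sup>*\<^sup>* g' g \<and> isOption\<^sup>*\<^sup>* h' h \<and> x = gsum g' h'"
    using assms unfolding isSubposition_def
  proof (induction rule: converse_rtranclp_induct)
    case base
    show ?case by blast
  next
    case (step y z)
    then obtain g' h' where z: "isOption\<^sup>*\<^sup>* g' g" "isOption\<^sup>*\<^sup>* h' h" "z = gsum g' h'"
      by blast
    from step.hyps(1)[unfolded z(3) isOption_gsum_iff] show ?case
      by (blast intro: converse_rtranclp_into_rtranclp z(1,2))
  qed
  with that show thesis unfolding isSubposition_def by blast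
qed

lemma leftDeadEnd_gsumD:
  assumes "leftDeadEnd (gsum g h)"
  shows "leftDeadEnd g" "leftDeadEnd h"
proof -
  have "leftOpts g' = {||} \<and> leftOpts h' = {||}"
    if "isSubposition g' g" "isSubposition h' h" for g' h'
    using assms isSubposition_gsum[OF that] unfolding leftDeadEnd_def
    by (metis gsum_opts(1) fimage_is_fempty funion_fempty)
  from this[OF _ isSubposition_refl] this[OF isSubposition_refl]
  show "leftDeadEnd g" "leftDeadEnd h"
    unfolding leftDeadEnd_def by auto
qed

lemma rightDeadEnd_gsumD:
  assumes "rightDeadEnd (gsum g h)"
  shows "rightDeadEnd g" "rightDeadEnd h"
proof -
  have "rightOpts g' = {||} \<and> rightOpts h' = {||}"
    if "isSubposition g' g" "isSubposition h' h" for g' h'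
    using assms isSubposition_gsum[OF that] unfolding rightDeadEnd_def
    by (metis gsum_opts(2) fimage_is_fempty funion_fempty)
  from this[OF _ isSubposition_refl] this[OF isSubposition_refl]
  show "rightDeadEnd g" "rightDeadEnd h"
    unfolding rightDeadEnd_def by auto
qed

lemma conjugate_gsum: "conjugate (gsum g h) = gsum (conjugate g) (conjugate h)"
proof (induction g h rule: gsum.induct)
  case (1 L R L' R')
  let ?g = "Game L R" and ?h = "Game L' R'"
  have left: "conjugate |`| ((\<lambda>x. gsum x ?h) |`| X) =
      (\<lambda>x. gsum x (conjugate ?h)) |`| (conjugate |`| X)"
    if "X = L \<or> X = R" for X
    unfolding fset.map_comp by (rule fimage_cong) (use 1 that in auto)
  have right: "conjugate |`| ((\<lambda>y. gsum ?g y) |`| X) =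
      (\<lambda>y. gsum (conjugate ?g) y) |`| (conjugate |`| X)"
    if "X = L' \<or> X = R'" for X
    unfolding fset.map_comp by (rule fimage_cong) (use 1 that in auto)
  show ?case
    using left[of L] left[of R] right[of L'] right[of R'] by (simp add: fimage_funion)
qed

definition deadEndsFrom :: "game set \<Rightarrow> game set" where
  "deadEndsFrom A = {g. \<forall>h. isSubposition h g \<longrightarrow>
     (leftDeadEnd h \<longrightarrow> h \<in> A) \<and> (rightDeadEnd h \<longrightarrow> conjugate h \<in> A)}"

lemma deadEndsFromI:
  assumes "\<And>h. isSubposition h g \<Longrightarrow> leftDeadEnd h \<Longrightarrow> h \<in> A"
    and "\<And>h. isSubposition h g \<Longrightarrow> rightDeadEnd h \<Longrightarrow> conjugate h \<in> A"
  shows "g \<in> deadEndsFrom A"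
  using assms unfolding deadEndsFrom_def by blast

lemma deadEndsFromD:
  assumes "g \<in> deadEndsFrom A" "isSubposition h g"
  shows "leftDeadEnd h \<Longrightarrow> h \<in> A" "rightDeadEnd h \<Longrightarrow> conjugate h \<in> A"
  using assms unfolding deadEndsFrom_def by blast+

lemma closedUnderOptions_deadEndsFrom: "closedUnderOptions (deadEndsFrom A)"
  unfolding closedUnderOptions_def
  by (intro ballI allI impI deadEndsFromI) (blast dest: deadEndsFromD isSubposition_option_trans)+

lemma closedUnderConjugates_deadEndsFrom: "closedUnderConjugates (deadEndsFrom A)"
  unfolding closedUnderConjugates_def
proof (intro ballI deadEndsFromI)
  fix g h
  assume g: "g \<in> deadEndsFrom A" and "isSubposition h (conjugate g)"
  then have sub: "isSubposition (conjugate h) g"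
    by (simp add: isSubposition_conjugate_iff)
  show "h \<in> A" if "leftDeadEnd h"
    using deadEndsFromD(2)[OF g sub] that by (simp add: rightDeadEnd_conjugate_iff)
  show "conjugate h \<in> A" if "rightDeadEnd h"
    using deadEndsFromD(1)[OF g sub] that by (simp add: leftDeadEnd_conjugate_iff)
qed

lemma closedUnderSums_deadEndsFrom:
  assumes "closedUnderSums A"
  shows "closedUnderSums (deadEndsFrom A)"
  unfolding closedUnderSums_def
proof (intro ballI deadEndsFromI)
  fix g h x
  assume g: "g \<in> deadEndsFrom A" and h: "h \<in> deadEndsFrom A"
    and "isSubposition x (gsum g h)"
  then obtain g' h' where sub: "isSubposition g' g" "isSubposition h' h"
    and x: "x = gsum g' h'"
    by (elim isSubposition_gsumE)
  show "x \<in> A" if "leftDeadEnd x"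
    using that assms deadEndsFromD(1)[OF g sub(1)] deadEndsFromD(1)[OF h sub(2)]
    unfolding x closedUnderSums_def by (blast dest: leftDeadEnd_gsumD)
  show "conjugate x \<in> A" if "rightDeadEnd x"
    using that assms deadEndsFromD(2)[OF g sub(1)] deadEndsFromD(2)[OF h sub(2)]
    unfolding x conjugate_gsum closedUnderSums_def by (blast dest: rightDeadEnd_gsumD)
qed

lemma Game_in_deadEndsFrom:
  assumes "L \<noteq> {||}" "R \<noteq> {||}" "fset L \<subseteq> deadEndsFrom A" "fset R \<subseteq> deadEndsFrom A"
  shows "Game L R \<in> deadEndsFrom A"
proof (rule deadEndsFromI)
  have options: "y \<in> deadEndsFrom A" if "isOption y (Game L R)" for y
    using that assms(3,4) unfolding isOption_def by auto
  show "h \<in> A" if "isSubposition h (Game L R)" "leftDeadEnd h" for h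
    using that(1)
  proof (cases rule: isSubpositionE)
    case (2 y)
    then show ?thesis using options deadEndsFromD(1) that(2) by blast
  qed (use that(2) not_leftDeadEnd_Game[OF assms(1)] in simp)
  show "conjugate h \<in> A" if "isSubposition h (Game L R)" "rightDeadEnd h" for h
    using that(1)
  proof (cases rule: isSubpositionE)
    case (2 y)
    then show ?thesis using options deadEndsFromD(2) that(2) by blast
  qed (use that(2) not_rightDeadEnd_Game[OF assms(2)] in simp)
qed

lemma universe_deadEndsFrom:
  assumes "closedUnderSums A"
  shows "universe (deadEndsFrom A)"
  unfolding universe_def
  using closedUnderOptions_deadEndsFrom closedUnderConjugates_deadEndsFrom
    closedUnderSums_deadEndsFrom[OF assms] Game_in_deadEndsFrom
  by simp

lemma subset_deadEndsFrom:
  assumes "closedUnderOptions A" "A \<subseteq> LeftDeadEnds"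
  shows "A \<subseteq> deadEndsFrom A"
proof (intro subsetI deadEndsFromI)
  fix g h
  assume "g \<in> A" "isSubposition h g"
  then have h: "h \<in> A" by (rule isSubposition_closedUnderOptions[OF assms(1)])
  then show "h \<in> A" .
  show "conjugate h \<in> A" if "rightDeadEnd h"
    using h assms(2) leftDeadEnd_rightDeadEnd_zero[OF _ that]
    unfolding LeftDeadEnds_def by auto
qed

lemma deadEndsFrom_Int_LeftDeadEnds: "deadEndsFrom A \<inter> LeftDeadEnds \<subseteq> A"
  unfolding LeftDeadEnds_def by (blast dest: deadEndsFromD(1)[OF _ isSubposition_refl])

lemma universeClosure_least: "universe U \<Longrightarrow> A \<subseteq> U \<Longrightarrow> universeClosure A \<subseteq> U"
  unfolding universeClosure_def by blast

lemma subset_universeClosure: "A \<subseteq> universeClosure A"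
  unfolding universeClosure_def by blast

theorem mainTheorem11:
  fixes A :: "game set"
  assumes "simplyClosed A"
    and "A \<subseteq> LeftDeadEnds"
  shows "universeClosure A \<inter> LeftDeadEnds = A"
proof -
  from assms(1) have options: "closedUnderOptions A" and sums: "closedUnderSums A"
    unfolding simplyClosed_def by simp_all
  have "universeClosure A \<subseteq> deadEndsFrom A"
    using universe_deadEndsFrom[OF sums] subset_deadEndsFrom[OF options assms(2)]
    by (rule universeClosure_least)
  then show ?thesis
    using deadEndsFrom_Int_LeftDeadEnds subset_universeClosure assms(2) by blast
qed

end
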